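(* Assume (H1)–(H4) as described in the context, let $\mu(E)=\int_{V_1^{c,d}}\chi_E(x,\varphi(x))\,dx$ for Borel $E\subset\mathbb{R}^4$, and let $E_\mu$ be its type set. If $(\frac1p,\frac1q)\in E_\mu$, then $\frac1q\ge\frac1p-\frac{\alpha_1+\alpha_2}{\alpha_1+\alpha_2+2m}$.
   Context: Fix $\alpha_1,\alpha_2>0$ with $\alpha_1\neq\alpha_2$. For $t>0$ and $x=(x_1,x_2)\in\mathbb{R}^2$ put $t\bullet x=(t^{\alpha_1}x_1,t^{\alpha_2}x_2)$. For reals $a<b$ let $V^{a,b}=\{t\bullet(1,s): a<s<b,\ t>0\}$, and for $a<c<d<b$ let $V^{c,d}=\{t\bullet(1,s):c<s<d,\ t>0\}$ and $V_1^{c,d}=\{t\bullet(1,s): c<s<d,\ 0<t<1\}$. Let $\varphi=(\varphi_1,\varphi_2):V^{a,b}\to\mathbb{R}^2$. For $x\in V^{a,b}$ let $\varphi_j''(x)$ be the Hessian of $\varphi_j$ at $x$ and $Q_x(\zeta)=\det(\zeta_1\varphi_1''(x)+\zeta_2\varphi_2''(x))$. A point $x$ is elliptic for $\varphi$ if $\min_{\zeta\in S^1}|Q_x(\zeta)|>0$. Assumptions: (H1) $\varphi$ is real analytic on $V^{a,b}$. (H2) For some $m\ge 3(\alpha_1+\alpha_2)$, $\varphi(t\bullet x)=t^m\varphi(x)$ for all $x\in V^{a,b}$, $t>0$. (H3) $a<c<d<b$ and $\sigma\in[c,d]$ are such that the set of nonelliptic points of $\varphi$ in $\overline{V^{c,d}}\setminus\{\mathbf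 0\}$ is exactly $\{t\bullet(1,\sigma):t>0\}$. (H4) With $\beta=2(m-\alpha_1-\alpha_2)$, there are positive integers $n_1,n_2$ and constants $D,\delta>0$ such that: if $\sigma\in(c,d]$ then $\min_{\zeta\in S^1}|Q_{t\bullet(1,s)}(\zeta)|\ge D t^\beta|s-\sigma|^{n_1}$ for $s\in(\sigma-\delta,\sigma)$, $t>0$; if $\sigma\in[c,d)$ then the same holds with $n_2$ for $s\in(\sigma,\sigma+\delta)$, $t>0$; and $\max\{n_1,n_2\}<\frac{2m}{\alpha_1+\alpha_2}-3$. Type set: $E_\mu$ is the set of $(\frac1p,\frac1q)\in[0,1]^2$ for which there is $C_{p,q}>0$ with $\|\mu*f\|_{L^q(\mathbb{R}^4)}\le C_{p,q}\|f\|_{L^p(\mathbb{R}^4)}$ for all $f\in\mathcal{S}(\mathbb{R}^4)$. *)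

theory Defs
  imports "HOL-Analysis.Analysis" "HOL-Probability.Essential_Supremum"
begin

text \<open>Points of R^2 are pairs of reals; points of R^4 are pairs of points of R^2,
  so that the graph point (x, phi x) is literally an element of R^4.\<close>

type_synonym R2 = "real \<times> real"
type_synonym R4 = "R2 \<times> R2"

definition dil :: "real \<Rightarrow> real \<Rightarrow> real \<Rightarrow> R2 \<Rightarrow> R2" where
  "dil a1 a2 t x = (t powr a1 * fst x, t powr a2 * snd x)"

definition cone :: "real \<Rightarrow> real \<Rightarrow> real \<Rightarrow> real \<Rightarrow> R2 set" where
  "cone a1 a2 a b = {dil a1 a2 t (1, s) | s t. a < s \<and> s < b \<and> 0 < t}"

definition cone1 :: "real \<Rightarrow> real \<Rightarrow> real \<Rightarrow> real \<Rightarrow> R2 set" where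
  "cone1 a1 a2 c d = {dil a1 a2 t (1, s) | s t. c < s \<and> s < d \<and> 0 < t \<and> t < 1}"

definition real_analytic_on2 :: "(R2 \<Rightarrow> real) \<Rightarrow> R2 set \<Rightarrow> bool" where
  "real_analytic_on2 f U \<longleftrightarrow>
     (\<forall>x\<in>U. \<exists>r>0. \<exists>c :: nat \<Rightarrow> nat \<Rightarrow> real. ball x r \<subseteq> U \<and>
        (\<forall>y\<in>ball x r.
           ((\<lambda>(i, j). c i j * (fst y - fst x) ^ i * (snd y - snd x) ^ j) has_sum f y) UNIV))"

definition pd1 :: "(R2 \<Rightarrow> real) \<Rightarrow> R2 \<Rightarrow> real" where
  "pd1 f x = deriv (\<lambda>u. f (u, snd x)) (fst x)"

definition pd2 :: "(R2 \<Rightarrow> real) \<Rightarrow> R2 \<Rightarrow> real" where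
  "pd2 f x = deriv (\<lambda>v. f (fst x, v)) (snd x)"

text \<open>Q_x(zeta) = det(zeta1 phi1''(x) + zeta2 phi2''(x)), with Hessian entries
  H_{ij} = d_i d_j; the 2x2 determinant written out.\<close>
definition Qform :: "(R2 \<Rightarrow> R2) \<Rightarrow> R2 \<Rightarrow> R2 \<Rightarrow> real" where
  "Qform \<phi> x \<zeta> =
     (let f1 = (\<lambda>y. fst (\<phi> y)); f2 = (\<lambda>y. snd (\<phi> y));
          h11 = fst \<zeta> * pd1 (pd1 f1) x + snd \<zeta> * pd1 (pd1 f2) x;
          h12 = fst \<zeta> * pd1 (pd2 f1) x + snd \<zeta> * pd1 (pd2 f2) x;
          h21 = fst \<zeta> * pd2 (pd1 f1) x + snd \<zeta> * pd2 (pd1 f2) x;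
          h22 = fst \<zeta> * pd2 (pd2 f1) x + snd \<zeta> * pd2 (pd2 f2) x
      in h11 * h22 - h12 * h21)"

text \<open>min over the unit circle of |Q_x| (the minimum exists by compactness;
  we write it as the infimum).\<close>
definition minQ :: "(R2 \<Rightarrow> R2) \<Rightarrow> R2 \<Rightarrow> real" where
  "minQ \<phi> x = (INF \<zeta>\<in>{\<zeta>::R2. (fst \<zeta>)\<^sup>2 + (snd \<zeta>)\<^sup>2 = 1}. \<bar>Qform \<phi> x \<zeta>\<bar>)"

definition elliptic :: "(R2 \<Rightarrow> R2) \<Rightarrow> R2 \<Rightarrow> bool" where
  "elliptic \<phi> x \<longleftrightarrow> minQ \<phi> x > 0"

text \<open>The measure mu(E) = int_{V_1^{c,d}} chi_E(x, phi x) dx on R^4 (push-forward of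
  Lebesgue measure on V_1^{c,d} under the graph map).\<close>
definition graph_measure :: "(R2 \<Rightarrow> R2) \<Rightarrow> R2 set \<Rightarrow> R4 measure" where
  "graph_measure \<phi> W = distr (restrict_space lborel W) borel (\<lambda>x. (x, \<phi> x))"

definition meas_conv :: "R4 measure \<Rightarrow> (R4 \<Rightarrow> complex) \<Rightarrow> R4 \<Rightarrow> complex" where
  "meas_conv \<mu> f z = (\<integral>y. f (z - y) \<partial>\<mu>)"

fun iter_partial :: "R4 list \<Rightarrow> (R4 \<Rightarrow> complex) \<Rightarrow> R4 \<Rightarrow> complex" where
  "iter_partial [] f = f"
| "iter_partial (e # es) f = (\<lambda>x. frechet_derivative (iter_partial es f) (at x) e)"

definition schwartz :: "(R4 \<Rightarrow> complex) \<Rightarrow> bool" where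
  "schwartz f \<longleftrightarrow>
     (\<forall>es \<in> lists (Basis :: R4 set).
        (\<forall>x. iter_partial es f differentiable (at x)) \<and>
        (\<forall>N::nat. bounded (range (\<lambda>x. (1 + norm x) ^ N * norm (iter_partial es f x)))))"

definition enn_powr :: "ennreal \<Rightarrow> real \<Rightarrow> ennreal" where
  "enn_powr x r = (if x = \<infinity> then \<infinity> else ennreal (enn2real x powr r))"

text \<open>L^p norm on R^4 parametrised by rp = 1/p in [0,1]; rp = 0 means p = infinity.\<close>
definition Lnorm :: "real \<Rightarrow> (R4 \<Rightarrow> complex) \<Rightarrow> ennreal" where
  "Lnorm rp g =
     (if rp = 0 then esssup lborel (\<lambda>x. ennreal (norm (g x)))
      else enn_powr (\<integral>\<^sup>+ x. enn_powr (ennreal (norm (g x))) (1 / rp) \<partial>lborel) rp)"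

definition type_set :: "R4 measure \<Rightarrow> (real \<times> real) set" where
  "type_set \<mu> = {(rp, rq). 0 \<le> rp \<and> rp \<le> 1 \<and> 0 \<le> rq \<and> rq \<le> 1 \<and>
      (\<exists>C>0. \<forall>f. schwartz f \<longrightarrow>
          Lnorm rq (meas_conv \<mu> f) \<le> ennreal C * Lnorm rp f)}"

end

(*
  A Knapp-type example.  Fix a small box Q inside V_1^{c,d}.  For 0 < delta <= 1 the dilate
  delta . Q stays inside V_1^{c,d}, and by homogeneity the graph of phi over it lies in a box of
  side lengths ~ delta^alpha1, delta^alpha2, delta^m, delta^m.  Test the L^p-L^q inequality on
  the Gaussian f adapted to that box: mu * f is bounded below by ~ |delta . Q| = delta^(alpha1+alpha2)
  on a box of volume ~ delta^(alpha1+alpha2+2m), whereas the L^p norm of f is ~ delta^((alpha1+alpha2+2m)/p).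
  Letting delta -> 0 forces the stated relation between 1/p and 1/q.  Only continuity (a consequence
  of analyticity) and homogeneity of phi enter.
*)
theory Submission
  imports Defs "HOL-Probability.Distributions"
begin

section \<open>Polynomials times Gaussians are Schwartz functions\<close>

text \<open>Polynomials as syntax trees, so that differentiation is a recursion on the tree.\<close>

datatype 'a polyexp = PConst real | PInner 'a | PAdd "'a polyexp" "'a polyexp" | PMul "'a polyexp" "'a polyexp"

fun polyexp_eval :: "'a::real_inner polyexp \<Rightarrow> 'a \<Rightarrow> real" where
  "polyexp_eval (PConst c) x = c"
| "polyexp_eval (PInner v) x = x \<bullet> v"
| "polyexp_eval (PAdd p q) x = polyexp_eval p x + polyexp_eval q x"
| "polyexp_eval (PMul p q) x = polyexp_eval p x * polyexp_eval q x"

fun polyexp_deriv :: "'a::real_inner \<Rightarrow> 'a polyexp \<Rightarrow> 'a polyexp" where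
  "polyexp_deriv h (PConst c) = PConst 0"
| "polyexp_deriv h (PInner v) = PConst (h \<bullet> v)"
| "polyexp_deriv h (PAdd p q) = PAdd (polyexp_deriv h p) (polyexp_deriv h q)"
| "polyexp_deriv h (PMul p q) = PAdd (PMul p (polyexp_deriv h q)) (PMul (polyexp_deriv h p) q)"

lemma has_derivative_polyexp_eval:
  "(polyexp_eval p has_derivative (\<lambda>h. polyexp_eval (polyexp_deriv h p) x)) (at x)"
proof (induction p)
  case (PInner v)
  then show ?case
    by (simp add: bounded_linear.has_derivative[OF bounded_linear_inner_left] has_derivative_ident)
next
  case (PMul p q)
  then show ?case
    using has_derivative_mult[OF PMul.IH] by (simp add: algebra_simps)
qed (simp_all add: has_derivative_add)

lemma polyexp_eval_polynomial_growth:
  "\<exists>C k. C \<ge> 0 \<and> (\<forall>x. \<bar>polyexp_eval p x\<bar> \<le> C * (1 + norm x) ^ k)"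
proof (induction p)
  case (PConst c)
  show ?case by (intro exI[of _ "\<bar>c\<bar>"] exI[of _ 0]) auto
next
  case (PInner v)
  have "\<bar>x \<bullet> v\<bar> \<le> norm v * (1 + norm x) ^ 1" for x
  proof -
    have "norm x * norm v \<le> norm v * (1 + norm x)" by (simp add: mult.commute mult_left_mono)
    with Cauchy_Schwarz_ineq2[of x v] show ?thesis by simp
  qed
  then show ?case by (intro exI[of _ "norm v"] exI[of _ 1]) auto
next
  case (PAdd p q)
  then obtain C1 k1 C2 k2 where h: "C1 \<ge> 0" "\<forall>x. \<bar>polyexp_eval p x\<bar> \<le> C1 * (1 + norm x) ^ k1"
    "C2 \<ge> 0" "\<forall>x. \<bar>polyexp_eval q x\<bar> \<le> C2 * (1 + norm x) ^ k2" by blast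
  show ?case
  proof (intro exI[of _ "C1 + C2"] exI[of _ "k1 + k2"] conjI allI)
    fix x :: 'a
    have "(1 + norm x) ^ k1 \<le> (1 + norm x) ^ (k1 + k2)" "(1 + norm x) ^ k2 \<le> (1 + norm x) ^ (k1 + k2)"
      by (intro power_increasing; simp)+
    then have "C1 * (1 + norm x) ^ k1 + C2 * (1 + norm x) ^ k2 \<le> (C1 + C2) * (1 + norm x) ^ (k1 + k2)"
      using h by (simp add: distrib_right add_mono mult_left_mono)
    then show "\<bar>polyexp_eval (PAdd p q) x\<bar> \<le> (C1 + C2) * (1 + norm x) ^ (k1 + k2)"
      unfolding polyexp_eval.simps
      using abs_triangle_ineq[of "polyexp_eval p x" "polyexp_eval q x"] h(2,4)[rule_format, of x]
      by linarith
  qed (use h in simp)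
next
  case (PMul p q)
  then obtain C1 k1 C2 k2 where h: "C1 \<ge> 0" "\<forall>x. \<bar>polyexp_eval p x\<bar> \<le> C1 * (1 + norm x) ^ k1"
    "C2 \<ge> 0" "\<forall>x. \<bar>polyexp_eval q x\<bar> \<le> C2 * (1 + norm x) ^ k2" by blast
  show ?case
  proof (intro exI[of _ "C1 * C2"] exI[of _ "k1 + k2"] conjI allI)
    fix x :: 'a
    have "\<bar>polyexp_eval (PMul p q) x\<bar> = \<bar>polyexp_eval p x\<bar> * \<bar>polyexp_eval q x\<bar>"
      by (simp add: abs_mult)
    also have "\<dots> \<le> (C1 * (1 + norm x) ^ k1) * (C2 * (1 + norm x) ^ k2)"
      using h by (intro mult_mono) auto
    finally show "\<bar>polyexp_eval (PMul p q) x\<bar> \<le> (C1 * C2) * (1 + norm x) ^ (k1 + k2)"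
      by (simp add: algebra_simps power_add)
  qed (use h in simp)
qed

lemma power_times_exp_neg_square_le:
  fixes lam r :: real and M :: nat
  assumes "lam > 0" "r \<ge> 0"
  shows "(1 + r) ^ M * exp (- lam * r\<^sup>2) \<le> exp (M\<^sup>2 / (4 * lam))"
proof -
  have "(1 + r) ^ M \<le> exp r ^ M"
    using assms by (intro power_mono) (auto simp: exp_ge_add_one_self)
  also have "\<dots> = exp (M * r)" by (simp add: exp_of_nat_mult)
  finally have "(1 + r) ^ M * exp (- lam * r\<^sup>2) \<le> exp (M * r) * exp (- lam * r\<^sup>2)"
    by (intro mult_right_mono) auto
  also have "\<dots> = exp (M * r - lam * r\<^sup>2)"
    by (simp add: exp_add[symmetric])
  also have "M * r - lam * r\<^sup>2 = M\<^sup>2 / (4 * lam) - lam * (r - M / (2 * lam))\<^sup>2"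
    using assms by (simp add: power2_eq_square field_simps)
  also have "exp \<dots> \<le> exp (M\<^sup>2 / (4 * lam))"
    using assms by simp
  finally show ?thesis .
qed

lemma has_derivative_polyexp_times_exp_neg:
  "((\<lambda>x. complex_of_real (polyexp_eval P x * exp (- polyexp_eval q x))) has_derivative
     (\<lambda>h. complex_of_real (polyexp_eval
        (PAdd (polyexp_deriv h P) (PMul (PConst (-1)) (PMul P (polyexp_deriv h q)))) x
        * exp (- polyexp_eval q x)))) (at x)"
proof -
  have "((\<lambda>x. exp (- polyexp_eval q x)) has_derivative
      (\<lambda>h. exp (- polyexp_eval q x) * - polyexp_eval (polyexp_deriv h q) x)) (at x)"
    using has_derivative_exp[OF has_derivative_minus[OF has_derivative_polyexp_eval]]
    by (simp add: mult.commute)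
  from has_derivative_of_real[OF has_derivative_mult[OF has_derivative_polyexp_eval this]]
  show ?thesis by (simp add: algebra_simps)
qed

lemma iter_partial_exp_neg_polyexp:
  "\<exists>P. iter_partial es (\<lambda>x. complex_of_real (exp (- polyexp_eval q x)))
      = (\<lambda>x. complex_of_real (polyexp_eval P x * exp (- polyexp_eval q x)))"
proof (induction es)
  case Nil
  show ?case by (intro exI[of _ "PConst 1"]) simp
next
  case (Cons e es)
  then obtain P where "iter_partial es (\<lambda>x. complex_of_real (exp (- polyexp_eval q x)))
      = (\<lambda>x. complex_of_real (polyexp_eval P x * exp (- polyexp_eval q x)))" by blast
  then show ?case
    by (intro exI[of _ "PAdd (polyexp_deriv e P) (PMul (PConst (-1)) (PMul P (polyexp_deriv e q)))"])
      (simp only: iter_partial.simps frechet_derivative_at[OF has_derivative_polyexp_times_exp_neg, symmetric])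
qed

lemma schwartz_exp_neg_polyexp:
  assumes lam: "lam > 0" and q: "\<And>x. polyexp_eval q x \<ge> lam * (norm x)\<^sup>2"
  shows "schwartz (\<lambda>x. complex_of_real (exp (- polyexp_eval q x)))"
  unfolding schwartz_def
proof (intro ballI conjI allI)
  fix es :: "R4 list" and x :: R4 and N :: nat
  obtain P where P: "iter_partial es (\<lambda>x. complex_of_real (exp (- polyexp_eval q x)))
      = (\<lambda>x. complex_of_real (polyexp_eval P x * exp (- polyexp_eval q x)))"
    using iter_partial_exp_neg_polyexp by blast
  show "iter_partial es (\<lambda>x. complex_of_real (exp (- polyexp_eval q x))) differentiable (at x)"
    unfolding P differentiable_def using has_derivative_polyexp_times_exp_neg by blast
  obtain C k where C: "C \<ge> 0" "\<And>x. \<bar>polyexp_eval P x\<bar> \<le> C * (1 + norm x) ^ k"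
    using polyexp_eval_polynomial_growth by blast
  show "bounded (range (\<lambda>x. (1 + norm x) ^ N *
      norm (iter_partial es (\<lambda>x. complex_of_real (exp (- polyexp_eval q x))) x)))"
    unfolding bounded_real
  proof (intro exI[of _ "C * exp ((N + k)\<^sup>2 / (4 * lam))"] ballI)
    fix y assume "y \<in> range (\<lambda>x. (1 + norm x) ^ N *
      norm (iter_partial es (\<lambda>x. complex_of_real (exp (- polyexp_eval q x))) x))"
    then obtain x where y: "y = (1 + norm x) ^ N *
        norm (iter_partial es (\<lambda>x. complex_of_real (exp (- polyexp_eval q x))) x)"
      by blast
    have "y = (1 + norm x) ^ N * \<bar>polyexp_eval P x\<bar> * exp (- polyexp_eval q x)"
      by (simp add: y P norm_mult abs_mult)
    also have "\<dots> \<le> (1 + norm x) ^ N * (C * (1 + norm x) ^ k) * exp (- lam * (norm x)\<^sup>2)"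
      using C q[of x] by (intro mult_mono) auto
    also have "\<dots> = C * ((1 + norm x) ^ (N + k) * exp (- lam * (norm x)\<^sup>2))"
      by (simp add: power_add algebra_simps)
    also have "\<dots> \<le> C * exp ((N + k)\<^sup>2 / (4 * lam))"
      using C lam by (intro mult_left_mono power_times_exp_neg_square_le) auto
    finally show "\<bar>y\<bar> \<le> C * exp ((N + k)\<^sup>2 / (4 * lam))"
      using y by simp
  qed
qed

section \<open>Anisotropic Gaussians\<close>

definition scaled_sqnorm :: "real \<Rightarrow> real \<Rightarrow> real \<Rightarrow> real \<Rightarrow> R4 \<Rightarrow> real" where
  "scaled_sqnorm h1 h2 h3 h4 w =
     (fst (fst w) / h1)\<^sup>2 + (snd (fst w) / h2)\<^sup>2 + (fst (snd w) / h3)\<^sup>2 + (snd (snd w) / h4)\<^sup>2"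

lemma scaled_sqnorm_nonneg: "0 \<le> scaled_sqnorm h1 h2 h3 h4 w"
  by (simp add: scaled_sqnorm_def)

lemma borel_measurable_scaled_sqnorm [measurable]: "scaled_sqnorm h1 h2 h3 h4 \<in> borel_measurable borel"
  unfolding scaled_sqnorm_def divide_inverse
  by (intro borel_measurable_continuous_onI continuous_intros)

lemma schwartz_exp_neg_scaled_sqnorm:
  assumes h: "0 < h1" "h1 \<le> 1" "0 < h2" "h2 \<le> 1" "0 < h3" "h3 \<le> 1" "0 < h4" "h4 \<le> 1"
  shows "schwartz (\<lambda>w. complex_of_real (exp (- scaled_sqnorm h1 h2 h3 h4 w)))"
proof -
  let ?sq = "\<lambda>e h. PMul (PConst (1 / h\<^sup>2)) (PMul (PInner e) (PInner e))"
  define q :: "R4 polyexp" where "q = PAdd (PAdd (PAdd (?sq ((1, 0), (0, 0)) h1) (?sq ((0, 1), (0, 0)) h2))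
      (?sq ((0, 0), (1, 0)) h3)) (?sq ((0, 0), (0, 1)) h4)"
  have q: "polyexp_eval q = scaled_sqnorm h1 h2 h3 h4"
    by (simp add: fun_eq_iff q_def scaled_sqnorm_def power_divide power2_eq_square inner_Pair)
  have sq_le: "x\<^sup>2 \<le> (x / h)\<^sup>2" if "0 < h" "h \<le> 1" for x h :: real
  proof -
    have "x\<^sup>2 * h\<^sup>2 \<le> x\<^sup>2" using that by (simp add: mult_left_le power_le_one)
    then show ?thesis using that by (simp add: power_divide le_divide_eq)
  qed
  have "1 * (norm w)\<^sup>2 \<le> polyexp_eval q w" for w :: R4
  proof -
    obtain a b c d where w: "w = ((a, b), (c, d))" by (metis prod.collapse)
    have "(norm w)\<^sup>2 = a\<^sup>2 + b\<^sup>2 + c\<^sup>2 + d\<^sup>2" by (simp add: w norm_Pair)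
    then show ?thesis
      using sq_le[OF h(1,2), of a] sq_le[OF h(3,4), of b] sq_le[OF h(5,6), of c] sq_le[OF h(7,8), of d]
      by (simp add: q w scaled_sqnorm_def)
  qed
  then show ?thesis
    using schwartz_exp_neg_polyexp[of 1 q] by (simp add: q)
qed

lemma nn_integral_exp_neg_scaled_square:
  fixes p h :: real
  assumes p: "p > 0" and h: "h > 0"
  shows "(\<integral>\<^sup>+u. ennreal (exp (- (p * (u / h)\<^sup>2))) \<partial>lborel) = ennreal (h * sqrt (pi / p))"
proof -
  define s where "s = h / sqrt (2 * p)"
  have s: "s > 0" using p h by (simp add: s_def)
  have K: "sqrt (2 * pi * s\<^sup>2) = h * sqrt (pi / p)"
    using p h by (simp add: s_def real_sqrt_mult real_sqrt_divide power_divide)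
  \<comment> \<open>the integrand is a multiple of the centred normal density with variance \<open>s\<^sup>2\<close>\<close>
  have "exp (- (p * (u / h)\<^sup>2)) = h * sqrt (pi / p) * normal_density 0 s u" for u
  proof -
    have "- (u - 0)\<^sup>2 / (2 * s\<^sup>2) = - (p * (u / h)\<^sup>2)"
      using p h by (simp add: s_def power_divide field_simps)
    then show ?thesis unfolding normal_density_def K[symmetric] using s by simp
  qed
  then have "(\<integral>\<^sup>+u. ennreal (exp (- (p * (u / h)\<^sup>2))) \<partial>lborel)
      = (\<integral>\<^sup>+u. ennreal (h * sqrt (pi / p)) * ennreal (normal_density 0 s u) \<partial>lborel)"
    using p h by (simp add: ennreal_mult)
  also have "\<dots> = ennreal (h * sqrt (pi / p)) * (\<integral>\<^sup>+u. ennreal (normal_density 0 s u) \<partial>lborel)"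
    by (rule nn_integral_cmult) measurable
  also have "(\<integral>\<^sup>+u. ennreal (normal_density 0 s u) \<partial>lborel) = 1"
    using s by (simp add: nn_integral_eq_integral integral_normal_density)
  finally show ?thesis by simp
qed

lemma nn_integral_lborel_prod_mult:
  fixes f :: "'a::euclidean_space \<Rightarrow> ennreal" and g :: "'b::euclidean_space \<Rightarrow> ennreal"
  assumes [measurable]: "f \<in> borel_measurable borel" "g \<in> borel_measurable borel"
  shows "(\<integral>\<^sup>+z. f (fst z) * g (snd z) \<partial>lborel) = (\<integral>\<^sup>+x. f x \<partial>lborel) * (\<integral>\<^sup>+y. g y \<partial>lborel)"
proof -
  have "(\<integral>\<^sup>+z. f (fst z) * g (snd z) \<partial>lborel) = (\<integral>\<^sup>+x. \<integral>\<^sup>+y. f x * g y \<partial>lborel \<partial>lborel)"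
    by (simp add: lborel_prod[symmetric] lborel.nn_integral_fst[symmetric])
  also have "\<dots> = (\<integral>\<^sup>+x. f x * (\<integral>\<^sup>+y. g y \<partial>lborel) \<partial>lborel)"
    by (intro nn_integral_cong nn_integral_cmult) simp
  also have "\<dots> = (\<integral>\<^sup>+x. f x \<partial>lborel) * (\<integral>\<^sup>+y. g y \<partial>lborel)"
    by (rule nn_integral_multc) simp
  finally show ?thesis .
qed

lemma nn_integral_exp_neg_scaled_sqnorm:
  assumes p: "p > 0" and h: "h1 > 0" "h2 > 0" "h3 > 0" "h4 > 0"
  shows "(\<integral>\<^sup>+w. ennreal (exp (- (p * scaled_sqnorm h1 h2 h3 h4 w))) \<partial>lborel)
    = ennreal ((pi / p)\<^sup>2 * (h1 * h2 * h3 * h4))"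
proof -
  let ?E = "\<lambda>h u. ennreal (exp (- (p * (u / h)\<^sup>2)))"
  have [measurable]: "?E h \<in> borel_measurable borel" for h
    by measurable
  have [measurable]: "(\<lambda>x::R2. ?E ha (fst x) * ?E hb (snd x)) \<in> borel_measurable borel" for ha hb
  proof -
    have [measurable]: "(\<lambda>x::R2. exp (- (p * (fst x / ha)\<^sup>2))) \<in> borel_measurable borel"
      "(\<lambda>x::R2. exp (- (p * (snd x / hb)\<^sup>2))) \<in> borel_measurable borel"
      unfolding divide_inverse by (intro borel_measurable_continuous_onI continuous_intros)+
    show ?thesis by measurable
  qed
  have split2: "(\<integral>\<^sup>+x. ?E ha (fst x) * ?E hb (snd x) \<partial>lborel)
      = ennreal (ha * sqrt (pi / p)) * ennreal (hb * sqrt (pi / p))"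
    if "ha > 0" "hb > 0" for ha hb
    using nn_integral_lborel_prod_mult[of "?E ha" "?E hb"] that p
    by (simp add: nn_integral_exp_neg_scaled_square)
  have "exp (- (p * scaled_sqnorm h1 h2 h3 h4 w))
      = (exp (- (p * (fst (fst w) / h1)\<^sup>2)) * exp (- (p * (snd (fst w) / h2)\<^sup>2)))
        * (exp (- (p * (fst (snd w) / h3)\<^sup>2)) * exp (- (p * (snd (snd w) / h4)\<^sup>2)))" for w
    by (simp add: scaled_sqnorm_def exp_add[symmetric] algebra_simps)
  then have "(\<integral>\<^sup>+w. ennreal (exp (- (p * scaled_sqnorm h1 h2 h3 h4 w))) \<partial>lborel)
      = (\<integral>\<^sup>+w. (?E h1 (fst (fst w)) * ?E h2 (snd (fst w))) * (?E h3 (fst (snd w)) * ?E h4 (snd (snd w))) \<partial>lborel)"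
    by (simp add: ennreal_mult)
  also have "\<dots> = (\<integral>\<^sup>+x. ?E h1 (fst x) * ?E h2 (snd x) \<partial>lborel) * (\<integral>\<^sup>+x. ?E h3 (fst x) * ?E h4 (snd x) \<partial>lborel)"
    using nn_integral_lborel_prod_mult[of "\<lambda>x. ?E h1 (fst x) * ?E h2 (snd x)"
          "\<lambda>x. ?E h3 (fst x) * ?E h4 (snd x)"]
    by simp
  also have "\<dots> = ennreal (h1 * sqrt (pi / p) * (h2 * sqrt (pi / p)) * (h3 * sqrt (pi / p) * (h4 * sqrt (pi / p))))"
    using h p by (simp add: split2 ennreal_mult)
  also have "h1 * sqrt (pi / p) * (h2 * sqrt (pi / p)) * (h3 * sqrt (pi / p) * (h4 * sqrt (pi / p)))
      = (sqrt (pi / p) * sqrt (pi / p))\<^sup>2 * (h1 * h2 * h3 * h4)"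
    by (simp add: power2_eq_square algebra_simps)
  also have "\<dots> = (pi / p)\<^sup>2 * (h1 * h2 * h3 * h4)"
    using p by simp
  finally show ?thesis .
qed

lemma Lnorm_exp_neg_scaled_sqnorm:
  assumes rp: "rp > 0" and h: "h1 > 0" "h2 > 0" "h3 > 0" "h4 > 0"
  shows "Lnorm rp (\<lambda>w. complex_of_real (exp (- scaled_sqnorm h1 h2 h3 h4 w)))
    = ennreal (((pi * rp)\<^sup>2 * (h1 * h2 * h3 * h4)) powr rp)"
proof -
  have "enn_powr (ennreal (norm (complex_of_real (exp (- scaled_sqnorm h1 h2 h3 h4 w))))) (1 / rp)
      = ennreal (exp (- ((1 / rp) * scaled_sqnorm h1 h2 h3 h4 w)))" for w
    by (simp add: enn_powr_def exp_powr_real)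
  then have "(\<integral>\<^sup>+w. enn_powr (ennreal (norm (complex_of_real (exp (- scaled_sqnorm h1 h2 h3 h4 w))))) (1 / rp) \<partial>lborel)
      = ennreal ((pi * rp)\<^sup>2 * (h1 * h2 * h3 * h4))"
    using rp h nn_integral_exp_neg_scaled_sqnorm[of "1 / rp" h1 h2 h3 h4] by simp
  then show ?thesis
    using rp h by (simp add: Lnorm_def enn_powr_def)
qed

lemma Lnorm_ge_of_bound_on_set:
  fixes g :: "R4 \<Rightarrow> complex"
  assumes rq: "0 \<le> rq" and L: "0 \<le> L" and Z: "Z \<in> sets lborel"
    and ZV: "emeasure lborel Z = ennreal V" and V: "V > 0"
    and gZ: "\<And>z. z \<in> Z \<Longrightarrow> L \<le> norm (g z)"
  shows "ennreal (L * V powr rq) \<le> Lnorm rq g"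
proof (cases "rq = 0")
  case True
  have "ennreal L \<le> esssup lborel (\<lambda>x. ennreal (norm (g x)))"
  proof (rule ccontr)
    assume "\<not> ?thesis"
    then have "AE x in lborel. ennreal (norm (g x)) < ennreal L"
      using esssup_AE[of "\<lambda>x. ennreal (norm (g x))" lborel] by (auto elim!: eventually_mono)
    then have "AE x in lborel. x \<notin> Z"
      by (rule eventually_mono) (use gZ in \<open>force simp: ennreal_less_iff\<close>)
    then have "emeasure lborel Z = 0"
      using AE_iff_measurable[OF Z] by simp
    then show False using ZV V by simp
  qed
  then show ?thesis using True V by (simp add: Lnorm_def)
next
  case False
  then have rq0: "rq > 0" using rq by simp
  let ?I = "\<integral>\<^sup>+ x. enn_powr (ennreal (norm (g x))) (1 / rq) \<partial>lborel"
  have "(\<integral>\<^sup>+ x. ennreal (L powr (1 / rq)) * indicator Z x \<partial>lborel) \<le> ?I"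
  proof (rule nn_integral_mono)
    fix x
    show "ennreal (L powr (1 / rq)) * indicator Z x \<le> enn_powr (ennreal (norm (g x))) (1 / rq)"
      using gZ[of x] L rq0 by (cases "x \<in> Z") (auto simp: enn_powr_def intro: powr_mono2)
  qed
  then have I: "ennreal (L powr (1 / rq) * V) \<le> ?I"
    using Z ZV L V by (simp add: nn_integral_cmult_indicator ennreal_mult)
  show ?thesis
  proof (cases "?I = \<infinity>")
    case True
    then show ?thesis using False by (simp add: Lnorm_def enn_powr_def)
  next
    case fin: False
    then obtain r where r: "?I = ennreal r" "r \<ge> 0" using ennreal_cases[of ?I] by auto
    have "L * V powr rq = (L powr (1 / rq) * V) powr rq"
      using L V rq0 by (simp add: powr_mult powr_powr)
    also have "\<dots> \<le> r powr rq"
      using I r L V rq0 by (intro powr_mono2) (auto simp: ennreal_le_iff)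
    finally show ?thesis using False r by (simp add: Lnorm_def enn_powr_def)
  qed
qed

section \<open>Convolving the graph measure with an adapted Gaussian\<close>

lemma square_diff_div_le:
  fixes a b h R :: real
  assumes "\<bar>a\<bar> \<le> h" "\<bar>b\<bar> \<le> h * R" "h > 0"
  shows "((a - b) / h)\<^sup>2 \<le> (1 + R)\<^sup>2"
proof -
  have "\<bar>(a - b) / h\<bar> \<le> 1 + R"
    using assms by (simp add: divide_le_eq algebra_simps)
  then have "\<bar>(a - b) / h\<bar>\<^sup>2 \<le> (1 + R)\<^sup>2" by (intro power_mono) auto
  then show ?thesis by (simp only: power2_abs)
qed

lemma norm_meas_conv_graph_measure_ge:
  fixes \<phi> :: "R2 \<Rightarrow> R2" and W S :: "R2 set"
  assumes W: "W \<in> sets lborel" "emeasure lborel W \<noteq> \<infinity>" and \<phi>: "continuous_on W \<phi>"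
    and S: "S \<in> sets lborel" "S \<subseteq> W"
    and h: "h1 > 0" "h2 > 0" "h3 > 0" "h4 > 0"
    and graph_S: "\<And>x. x \<in> S \<Longrightarrow> \<bar>fst x\<bar> \<le> h1 * R \<and> \<bar>snd x\<bar> \<le> h2 * R \<and>
        \<bar>fst (\<phi> x)\<bar> \<le> h3 * R \<and> \<bar>snd (\<phi> x)\<bar> \<le> h4 * R"
    and z: "z \<in> cbox ((- h1, - h2), (- h3, - h4)) ((h1, h2), (h3, h4))"
  shows "exp (- (4 * (1 + R)\<^sup>2)) * measure lborel S
    \<le> norm (meas_conv (graph_measure \<phi> W) (\<lambda>w. complex_of_real (exp (- scaled_sqnorm h1 h2 h3 h4 w))) z)"
proof -
  define M where "M = restrict_space lborel W"
  define G where "G = (\<lambda>x::R2. (x, \<phi> x))"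
  define F where "F = (\<lambda>x. exp (- scaled_sqnorm h1 h2 h3 h4 (z - G x)))"
  have space_M: "space M = W" by (simp add: M_def space_restrict_space)
  have G: "G \<in> borel_measurable M"
  proof -
    have "G \<in> borel_measurable (restrict_space borel W)"
      using \<phi> unfolding G_def by (intro borel_measurable_continuous_on_restrict continuous_intros)
    moreover have "sets M = sets (restrict_space borel W)"
      unfolding M_def by (rule sets_restrict_space_cong) simp
    ultimately show ?thesis using measurable_cong_sets by blast
  qed
  have "finite_measure M"
    using W by (intro finite_measureI) (simp add: M_def space_M emeasure_restrict_space)
  moreover have "F \<in> borel_measurable M"
    unfolding F_def using G by measurable
  ultimately have F_int: "integrable M F"
    by (intro finite_measure.integrable_const_bound[where B = 1])
      (auto simp: F_def scaled_sqnorm_nonneg)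
  have conv: "meas_conv (graph_measure \<phi> W) (\<lambda>w. complex_of_real (exp (- scaled_sqnorm h1 h2 h3 h4 w))) z
      = complex_of_real (\<integral>x. F x \<partial>M)"
    unfolding meas_conv_def graph_measure_def M_def[symmetric] G_def[symmetric] F_def
    by (subst integral_distr[OF G]) auto
  have "exp (- (4 * (1 + R)\<^sup>2)) * indicator S x \<le> F x" for x
  proof (cases "x \<in> S")
    case True
    have "\<bar>fst (fst z)\<bar> \<le> h1" "\<bar>snd (fst z)\<bar> \<le> h2" "\<bar>fst (snd z)\<bar> \<le> h3" "\<bar>snd (snd z)\<bar> \<le> h4"
      using z by (cases z; auto simp: cbox_Pair_iff abs_le_iff)+
    then have "scaled_sqnorm h1 h2 h3 h4 (z - G x) \<le> (1 + R)\<^sup>2 + (1 + R)\<^sup>2 + (1 + R)\<^sup>2 + (1 + R)\<^sup>2"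
      unfolding scaled_sqnorm_def G_def using graph_S[OF True] h
      by (simp only: fst_diff snd_diff fst_conv snd_conv) (intro add_mono square_diff_div_le; simp)
    then show ?thesis using True by (simp add: F_def)
  qed (simp add: F_def)
  then have "(\<integral>x. exp (- (4 * (1 + R)\<^sup>2)) * indicator S x \<partial>M) \<le> (\<integral>x. F x \<partial>M)"
    by (intro integral_mono' F_int) (auto simp: F_def)
  moreover have "(\<integral>x. exp (- (4 * (1 + R)\<^sup>2)) * indicator S x \<partial>M) = exp (- (4 * (1 + R)\<^sup>2)) * measure lborel S"
    using S W by (simp add: M_def measure_restrict_space Int_absorb2 space_restrict_space)
  ultimately show ?thesis
    unfolding conv by simp
qed

lemma Lnorm_meas_conv_graph_measure_ge:
  fixes \<phi> :: "R2 \<Rightarrow> R2" and W S :: "R2 set"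
  assumes W: "W \<in> sets lborel" "emeasure lborel W \<noteq> \<infinity>" and \<phi>: "continuous_on W \<phi>"
    and S: "S \<in> sets lborel" "S \<subseteq> W"
    and h: "h1 > 0" "h2 > 0" "h3 > 0" "h4 > 0"
    and graph_S: "\<And>x. x \<in> S \<Longrightarrow> \<bar>fst x\<bar> \<le> h1 * R \<and> \<bar>snd x\<bar> \<le> h2 * R \<and>
        \<bar>fst (\<phi> x)\<bar> \<le> h3 * R \<and> \<bar>snd (\<phi> x)\<bar> \<le> h4 * R"
    and rq: "0 \<le> rq"
  shows "ennreal (exp (- (4 * (1 + R)\<^sup>2)) * measure lborel S * (16 * (h1 * h2 * h3 * h4)) powr rq)
    \<le> Lnorm rq (meas_conv (graph_measure \<phi> W) (\<lambda>w. complex_of_real (exp (- scaled_sqnorm h1 h2 h3 h4 w))))"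
proof (rule Lnorm_ge_of_bound_on_set[OF rq])
  let ?Z = "cbox ((- h1, - h2), (- h3, - h4)) ((h1, h2), (h3, h4)) :: R4 set"
  show "emeasure lborel ?Z = ennreal (16 * (h1 * h2 * h3 * h4))"
    using h by (simp add: emeasure_lborel_cbox_eq Basis_prod_def prod.union_disjoint inner_Pair
        prod.reindex inj_on_def zero_prod_def algebra_simps)
  show "\<And>z. z \<in> ?Z \<Longrightarrow> exp (- (4 * (1 + R)\<^sup>2)) * measure lborel S \<le> norm (meas_conv (graph_measure \<phi> W)
      (\<lambda>w. complex_of_real (exp (- scaled_sqnorm h1 h2 h3 h4 w))) z)"
    by (rule norm_meas_conv_graph_measure_ge[OF W \<phi> S h graph_S])
qed (use h in auto)

section \<open>Continuity of real-analytic functions\<close>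

lemma power_series2_increment_le:
  fixes c :: "nat \<Rightarrow> nat \<Rightarrow> real"
  assumes T: "((\<lambda>(i, j). c i j * u ^ i * v ^ j) has_sum s) UNIV"
    and S: "((\<lambda>(i, j). \<bar>c i j\<bar> * \<rho> ^ i * \<rho> ^ j) has_sum S) UNIV"
    and uv: "\<bar>u\<bar> \<le> e" "\<bar>v\<bar> \<le> e" and e: "0 \<le> e" "e \<le> \<rho>" and \<rho>: "\<rho> > 0"
  shows "\<bar>s - c 0 0\<bar> \<le> e / \<rho> * S"
proof -
  define a where "a = (\<lambda>(i, j). if (i, j) = (0, 0) then 0 else c i j * u ^ i * v ^ j)"
  define b where "b = (\<lambda>(i, j). e / \<rho> * (\<bar>c i j\<bar> * \<rho> ^ i * \<rho> ^ j))"
  have "((\<lambda>p::nat \<times> nat. if p = (0, 0) then c 0 0 else 0) has_sum c 0 0) {(0, 0)}"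
    by (rule has_sum_finiteI) auto
  then have "((\<lambda>p::nat \<times> nat. if p = (0, 0) then c 0 0 else 0) has_sum c 0 0) UNIV"
    by (rule has_sum_cong_neutral[THEN iffD1, rotated -1]) auto
  moreover have "a = (\<lambda>p. (\<lambda>(i, j). c i j * u ^ i * v ^ j) p + - (if p = (0, 0) then c 0 0 else 0))"
    by (auto simp: a_def fun_eq_iff)
  ultimately have a: "(a has_sum (s - c 0 0)) UNIV"
    using has_sum_add[OF T has_sum_uminusI] by simp
  have b: "(b has_sum (e / \<rho> * S)) UNIV"
    using has_sum_cmult_right[OF S, of "e / \<rho>"] by (simp add: b_def case_prod_unfold)
  have ab: "\<bar>a p\<bar> \<le> b p" for p
  proof (cases p)
    case (Pair i j)
    show ?thesis
    proof (cases "(i, j) = (0, 0)")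
      case False
      have "e ^ (i + j) = (e / \<rho>) ^ (i + j) * \<rho> ^ (i + j)"
        using \<rho> by (simp add: power_divide)
      also have "\<dots> \<le> (e / \<rho>) * \<rho> ^ (i + j)"
        using False e \<rho> by (intro mult_right_mono power_le_one_iff[THEN iffD2]) (auto intro: power_decreasing[of 1, simplified])
      finally have e_pow: "e ^ (i + j) \<le> e / \<rho> * \<rho> ^ (i + j)" .
      have "\<bar>a p\<bar> = \<bar>c i j\<bar> * \<bar>u\<bar> ^ i * \<bar>v\<bar> ^ j"
        using Pair False by (auto simp: a_def abs_mult power_abs)
      also have "\<dots> \<le> \<bar>c i j\<bar> * e ^ (i + j)"
        unfolding power_add mult.assoc using uv by (intro mult_left_mono mult_mono power_mono) auto
      also have "\<dots> \<le> \<bar>c i j\<bar> * (e / \<rho> * \<rho> ^ (i + j))"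
        by (rule mult_left_mono[OF e_pow]) simp
      also have "\<dots> = b p"
        by (simp add: Pair b_def power_add)
      finally show ?thesis .
    qed (use Pair e \<rho> in \<open>simp add: a_def b_def\<close>)
  qed
  have "a p \<le> b p" "- b p \<le> a p" for p
    using ab[of p] unfolding abs_le_iff by linarith+
  then have "s - c 0 0 \<le> e / \<rho> * S" "- (e / \<rho> * S) \<le> s - c 0 0"
    using has_sum_mono[OF a b] has_sum_mono[OF has_sum_uminusI[OF b] a] by auto
  then show ?thesis by linarith
qed

lemma real_analytic_on2_imp_isCont:
  assumes f: "real_analytic_on2 f U" and x: "x \<in> U"
  shows "isCont f x"
proof -
  obtain r c where r: "r > 0" and series: "\<And>y. y \<in> ball x r \<Longrightarrow>
      ((\<lambda>(i, j). c i j * (fst y - fst x) ^ i * (snd y - snd x) ^ j) has_sum f y) UNIV"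
    using f x unfolding real_analytic_on2_def by blast
  define \<rho> where "\<rho> = r / 2"
  have \<rho>: "\<rho> > 0" using r by (simp add: \<rho>_def)
  have "dist x (fst x + \<rho>, snd x + \<rho>) = sqrt 2 * \<rho>"
    using \<rho> by (cases x) (simp add: dist_Pair_Pair dist_real_def real_sqrt_mult)
  also have "\<dots> < r"
    using \<rho> sqrt2_less_2 by (simp add: \<rho>_def)
  finally have "(fst x + \<rho>, snd x + \<rho>) \<in> ball x r"
    by simp
  from series[OF this] have "(\<lambda>(i, j). c i j * \<rho> ^ i * \<rho> ^ j) summable_on UNIV"
    by (auto simp: summable_on_def)
  then have "(\<lambda>p. norm ((\<lambda>(i, j). c i j * \<rho> ^ i * \<rho> ^ j) p)) summable_on UNIV"
    using summable_on_iff_abs_summable_on_real by blast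
  then obtain S where S: "((\<lambda>(i, j). \<bar>c i j\<bar> * \<rho> ^ i * \<rho> ^ j) has_sum S) UNIV"
    using \<rho> by (auto simp: summable_on_def case_prod_unfold abs_mult)
  have bound: "\<bar>f y - c 0 0\<bar> \<le> dist y x / \<rho> * S" if "dist y x \<le> \<rho>" for y
  proof (rule power_series2_increment_le[OF series S _ _ _ that \<rho>])
    show "y \<in> ball x r" using that \<rho> by (simp add: \<rho>_def dist_commute)
    show "\<bar>fst y - fst x\<bar> \<le> dist y x" "\<bar>snd y - snd x\<bar> \<le> dist y x"
      by (metis dist_fst_le dist_real_def, metis dist_snd_le dist_real_def)
  qed simp
  have fx: "f x = c 0 0"
    using bound[of x] \<rho> by simp
  have "((\<lambda>y. f y - f x) \<longlongrightarrow> 0) (at x)"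
  proof (rule Lim_null_comparison)
    show "\<forall>\<^sub>F y in at x. norm (f y - f x) \<le> dist y x / \<rho> * S"
      using eventually_at[of "\<lambda>y. norm (f y - f x) \<le> dist y x / \<rho> * S" x UNIV] \<rho> bound
      by (auto simp: fx intro!: exI[of _ \<rho>])
    show "((\<lambda>y. dist y x / \<rho> * S) \<longlongrightarrow> 0) (at x)"
      using \<rho> by (auto intro!: tendsto_eq_intros)
  qed
  then show ?thesis
    unfolding isCont_def by (rule LIM_zero_cancel)
qed

section \<open>Dilations and the truncated cone\<close>

lemma dil_mult: "0 < t \<Longrightarrow> 0 < u \<Longrightarrow> dil \<alpha>1 \<alpha>2 u (dil \<alpha>1 \<alpha>2 t x) = dil \<alpha>1 \<alpha>2 (u * t) x"
  by (simp add: dil_def powr_mult)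

lemma cbox_dil:
  assumes t: "0 < t"
  shows "cbox (dil \<alpha>1 \<alpha>2 t a) (dil \<alpha>1 \<alpha>2 t b) = dil \<alpha>1 \<alpha>2 t ` cbox a b"
proof (intro equalityI subsetI)
  fix x assume "x \<in> cbox (dil \<alpha>1 \<alpha>2 t a) (dil \<alpha>1 \<alpha>2 t b)"
  then have "dil \<alpha>1 \<alpha>2 (1 / t) x \<in> cbox a b"
    using t by (cases x; cases a; cases b) (auto simp: dil_def cbox_Pair_iff powr_divide field_simps)
  moreover have "x = dil \<alpha>1 \<alpha>2 t (dil \<alpha>1 \<alpha>2 (1 / t) x)"
    using t by (simp add: dil_mult) (simp add: dil_def)
  ultimately show "x \<in> dil \<alpha>1 \<alpha>2 t ` cbox a b" by blast
next
  fix x assume "x \<in> dil \<alpha>1 \<alpha>2 t ` cbox a b"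
  then show "x \<in> cbox (dil \<alpha>1 \<alpha>2 t a) (dil \<alpha>1 \<alpha>2 t b)"
    by (cases a; cases b) (auto simp: dil_def cbox_Pair_iff mult_left_mono)
qed

lemma measure_cbox_dil:
  assumes t: "0 < t"
  shows "measure lborel (cbox (dil \<alpha>1 \<alpha>2 t a) (dil \<alpha>1 \<alpha>2 t b))
    = t powr (\<alpha>1 + \<alpha>2) * measure lborel (cbox a b)"
  using t by (cases a; cases b) (auto simp: dil_def content_Pair powr_add algebra_simps)

lemma mem_cone1_iff:
  assumes "\<alpha>1 > 0"
  shows "x \<in> cone1 \<alpha>1 \<alpha>2 c d \<longleftrightarrow>
    0 < fst x \<and> fst x < 1 \<and> c < snd x / fst x powr (\<alpha>2 / \<alpha>1) \<and> snd x / fst x powr (\<alpha>2 / \<alpha>1) < d"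
proof
  assume "x \<in> cone1 \<alpha>1 \<alpha>2 c d"
  then obtain s t where x: "x = dil \<alpha>1 \<alpha>2 t (1, s)" and st: "c < s" "s < d" "0 < t" "t < 1"
    unfolding cone1_def by blast
  have "fst x powr (\<alpha>2 / \<alpha>1) = t powr \<alpha>2"
    using assms by (simp add: x dil_def powr_powr)
  moreover have "t powr \<alpha>1 < 1"
    using st assms powr_less_mono2[of \<alpha>1 t 1] by simp
  ultimately show "0 < fst x \<and> fst x < 1 \<and> c < snd x / fst x powr (\<alpha>2 / \<alpha>1) \<and> snd x / fst x powr (\<alpha>2 / \<alpha>1) < d"
    using st by (simp add: x dil_def)
next
  assume x: "0 < fst x \<and> fst x < 1 \<and> c < snd x / fst x powr (\<alpha>2 / \<alpha>1) \<and> snd x / fst x powr (\<alpha>2 / \<alpha>1) < d"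
  define t where "t = fst x powr (1 / \<alpha>1)"
  have "t < 1"
    using x assms powr_less_mono2[of "1 / \<alpha>1" "fst x" 1] by (simp add: t_def)
  moreover have "x = dil \<alpha>1 \<alpha>2 t (1, snd x / fst x powr (\<alpha>2 / \<alpha>1))"
    using assms x by (cases x) (simp add: dil_def t_def powr_powr)
  moreover have "0 < t" using x by (simp add: t_def)
  ultimately show "x \<in> cone1 \<alpha>1 \<alpha>2 c d"
    unfolding cone1_def using x by blast
qed

lemma open_cone1: "\<alpha>1 > 0 \<Longrightarrow> open (cone1 \<alpha>1 \<alpha>2 c d)"
proof -
  assume \<alpha>1: "\<alpha>1 > 0"
  let ?F = "\<lambda>x::R2. (fst x, snd x / fst x powr (\<alpha>2 / \<alpha>1))"
  have "open ({x. 0 < fst x} \<inter> ?F -` ({0<..<1} \<times> {c<..<d}))"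
    by (intro continuous_open_preimage open_Times continuous_intros)
      (auto simp: open_Collect_less continuous_on_fst continuous_on_const)
  moreover have "{x. 0 < fst x} \<inter> ?F -` ({0<..<1} \<times> {c<..<d}) = cone1 \<alpha>1 \<alpha>2 c d"
    using mem_cone1_iff[OF \<alpha>1] by auto
  ultimately show ?thesis by simp
qed

lemma bounded_cone1:
  assumes "\<alpha>1 > 0" "\<alpha>2 > 0"
  shows "bounded (cone1 \<alpha>1 \<alpha>2 c d)"
proof (rule bounded_subset[OF bounded_cbox], intro subsetI)
  fix x assume "x \<in> cone1 \<alpha>1 \<alpha>2 c d"
  then obtain s t where x: "x = dil \<alpha>1 \<alpha>2 t (1, s)" and st: "c < s" "s < d" "0 < t" "t < 1"
    unfolding cone1_def by blast
  have "t powr \<alpha>1 \<le> 1" "t powr \<alpha>2 \<le> 1"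
    using st assms by (simp_all add: powr_le1)
  moreover have "\<bar>s\<bar> \<le> \<bar>c\<bar> + \<bar>d\<bar>" using st by linarith
  ultimately have "\<bar>t powr \<alpha>2 * s\<bar> \<le> 1 * (\<bar>c\<bar> + \<bar>d\<bar>)"
    unfolding abs_mult by (intro mult_mono) auto
  then show "x \<in> cbox (0, - (\<bar>c\<bar> + \<bar>d\<bar>)) (1, \<bar>c\<bar> + \<bar>d\<bar>)"
    using \<open>t powr \<alpha>1 \<le> 1\<close> by (auto simp: x dil_def cbox_Pair_iff abs_le_iff)
qed

lemma cone1_subset_cone: "a \<le> c \<Longrightarrow> d \<le> b \<Longrightarrow> cone1 \<alpha>1 \<alpha>2 c d \<subseteq> cone \<alpha>1 \<alpha>2 a b"
  unfolding cone1_def cone_def by fastforce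

lemma dil_in_cone1:
  assumes "x \<in> cone1 \<alpha>1 \<alpha>2 c d" "0 < u" "u \<le> 1"
  shows "dil \<alpha>1 \<alpha>2 u x \<in> cone1 \<alpha>1 \<alpha>2 c d"
proof -
  obtain s t where x: "x = dil \<alpha>1 \<alpha>2 t (1, s)" and st: "c < s" "s < d" "0 < t" "t < 1"
    using assms(1) unfolding cone1_def by blast
  have "u * t < 1"
    using st assms mult_right_mono[of u 1 t] by linarith
  moreover have "dil \<alpha>1 \<alpha>2 u x = dil \<alpha>1 \<alpha>2 (u * t) (1, s)"
    using st assms by (simp add: x dil_mult)
  moreover have "0 < u * t" using st assms by simp
  ultimately show ?thesis
    unfolding cone1_def using st by blast
qed

lemma open_contains_cbox_bounded_graph:
  fixes \<phi> :: "R2 \<Rightarrow> R2" and W :: "R2 set"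
  assumes W: "open W" "W \<noteq> {}" and \<phi>: "continuous_on W \<phi>"
  obtains a b R where "cbox a b \<subseteq> W" "0 < measure lborel (cbox a b)"
    "\<And>q. q \<in> cbox a b \<Longrightarrow>
      \<bar>fst q\<bar> \<le> R \<and> \<bar>snd q\<bar> \<le> R \<and> \<bar>fst (\<phi> q)\<bar> \<le> R \<and> \<bar>snd (\<phi> q)\<bar> \<le> R"
proof -
  obtain p where "p \<in> W" using W(2) by blast
  then obtain a b where Q: "cbox a b \<subseteq> W" "\<forall>i\<in>Basis. a \<bullet> i < b \<bullet> i"
    using open_contains_cbox[OF W(1)] by blast
  have "continuous_on (cbox a b) (\<lambda>q. (q, \<phi> q))"
    using continuous_on_subset[OF \<phi> Q(1)] by (intro continuous_intros)
  then have "bounded ((\<lambda>q. (q, \<phi> q)) ` cbox a b)"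
    by (intro compact_imp_bounded compact_continuous_image compact_cbox)
  then obtain R where R: "\<forall>y\<in>(\<lambda>q. (q, \<phi> q)) ` cbox a b. norm y \<le> R"
    unfolding bounded_iff by blast
  have component_le: "\<bar>fst y\<bar> \<le> norm y" "\<bar>snd y\<bar> \<le> norm y" for y :: R2
    using norm_fst_le[of "fst y" "snd y"] norm_snd_le[of "snd y" "fst y"] by simp_all
  have "\<bar>fst q\<bar> \<le> R \<and> \<bar>snd q\<bar> \<le> R \<and> \<bar>fst (\<phi> q)\<bar> \<le> R \<and> \<bar>snd (\<phi> q)\<bar> \<le> R"
    if "q \<in> cbox a b" for q
    using R that norm_fst_le[of q "\<phi> q"] norm_snd_le[of "\<phi> q" q]
      component_le[of q] component_le[of "\<phi> q"]
    by (intro conjI; force)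
  with that Q(1) content_pos_lt[OF Q(2)] show ?thesis by blast
qed

section \<open>The scaling argument\<close>

lemma exponent_le_of_powr_bound:
  fixes X Y a b :: real
  assumes X: "X > 0" and Y: "Y > 0"
    and bound: "\<And>\<delta>. 0 < \<delta> \<Longrightarrow> \<delta> \<le> 1 \<Longrightarrow> X * \<delta> powr a \<le> Y * \<delta> powr b"
  shows "b \<le> a"
proof (rule ccontr)
  assume "\<not> b \<le> a"
  \<comment> \<open>as \<open>a < b\<close>, \<open>\<delta> powr (a - b)\<close> exceeds \<open>Y / X\<close> for small \<open>\<delta>\<close>\<close>
  define K where "K = Y / X + 1"
  define \<delta> where "\<delta> = K powr (1 / (a - b))"
  have K: "K > 1" using X Y by (simp add: K_def)
  have \<delta>: "0 < \<delta>" "\<delta> \<le> 1"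
    using K \<open>\<not> b \<le> a\<close> by (auto simp: \<delta>_def powr_le1 divide_neg_pos powr_le_one_le
        intro: order_trans[OF powr_mono[of "1 / (a - b)" 0 K]])
  have "X * \<delta> powr (a - b) * \<delta> powr b \<le> Y * \<delta> powr b"
    using bound[OF \<delta>] by (simp add: mult.assoc powr_add[symmetric])
  then have "X * \<delta> powr (a - b) \<le> Y"
    using \<delta> by simp
  moreover have "\<delta> powr (a - b) = K"
    using K \<open>\<not> b \<le> a\<close> by (simp add: \<delta>_def powr_powr)
  ultimately have "X * K \<le> Y" by simp
  moreover have "X * K = Y + X" using X by (simp add: K_def field_simps)
  ultimately show False using X by linarith
qed

lemma powr_mult_widths: "(x::real) powr a * x powr b * x powr c * x powr c = x powr (a + b + 2 * c)"
  by (simp add: powr_add[symmetric] algebra_simps)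

lemma Lnorm_meas_conv_graph_measure_dilated_ge:
  fixes \<phi> :: "R2 \<Rightarrow> R2" and W :: "R2 set"
  assumes W: "W \<in> sets lborel" "emeasure lborel W \<noteq> \<infinity>" and \<phi>: "continuous_on W \<phi>"
    and dil_W: "\<And>x t. x \<in> W \<Longrightarrow> 0 < t \<Longrightarrow> t \<le> 1 \<Longrightarrow> dil \<alpha>1 \<alpha>2 t x \<in> W"
    and homogeneous: "\<And>x t. x \<in> W \<Longrightarrow> 0 < t \<Longrightarrow> t \<le> 1 \<Longrightarrow> \<phi> (dil \<alpha>1 \<alpha>2 t x) = t powr m *\<^sub>R \<phi> x"
    and Q: "cbox a b \<subseteq> W"
    and graph_Q: "\<And>q. q \<in> cbox a b \<Longrightarrow>
        \<bar>fst q\<bar> \<le> R \<and> \<bar>snd q\<bar> \<le> R \<and> \<bar>fst (\<phi> q)\<bar> \<le> R \<and> \<bar>snd (\<phi> q)\<bar> \<le> R"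
    and rq: "0 \<le> rq" and \<delta>: "0 < \<delta>" "\<delta> \<le> 1"
  shows "ennreal (exp (- (4 * (1 + R)\<^sup>2)) * measure lborel (cbox a b) * 16 powr rq
      * \<delta> powr (\<alpha>1 + \<alpha>2 + (\<alpha>1 + \<alpha>2 + 2 * m) * rq))
    \<le> Lnorm rq (meas_conv (graph_measure \<phi> W) (\<lambda>w. complex_of_real
        (exp (- scaled_sqnorm (\<delta> powr \<alpha>1) (\<delta> powr \<alpha>2) (\<delta> powr m) (\<delta> powr m) w))))"
proof -
  define S where "S = cbox (dil \<alpha>1 \<alpha>2 \<delta> a) (dil \<alpha>1 \<alpha>2 \<delta> b)"
  have S: "S = dil \<alpha>1 \<alpha>2 \<delta> ` cbox a b"
    unfolding S_def by (rule cbox_dil[OF \<delta>(1)])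
  have S_W: "S \<subseteq> W"
  proof
    fix x assume "x \<in> S"
    then obtain q where "q \<in> cbox a b" "x = dil \<alpha>1 \<alpha>2 \<delta> q"
      using S by blast
    then show "x \<in> W"
      using dil_W[OF subsetD[OF Q] \<delta>] by blast
  qed
  have graph_S: "\<bar>fst x\<bar> \<le> \<delta> powr \<alpha>1 * R \<and> \<bar>snd x\<bar> \<le> \<delta> powr \<alpha>2 * R \<and>
      \<bar>fst (\<phi> x)\<bar> \<le> \<delta> powr m * R \<and> \<bar>snd (\<phi> x)\<bar> \<le> \<delta> powr m * R" if x: "x \<in> S" for x
  proof -
    obtain q where q: "q \<in> cbox a b" "x = dil \<alpha>1 \<alpha>2 \<delta> q"
      using x S by blast
    have "\<phi> x = \<delta> powr m *\<^sub>R \<phi> q"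
      using homogeneous[OF subsetD[OF Q q(1)] \<delta>] by (simp add: q(2))
    then show ?thesis
      using graph_Q[OF q(1)] by (simp add: q(2) dil_def abs_mult mult_left_mono)
  qed
  have "ennreal (exp (- (4 * (1 + R)\<^sup>2)) * measure lborel S
      * (16 * (\<delta> powr \<alpha>1 * \<delta> powr \<alpha>2 * \<delta> powr m * \<delta> powr m)) powr rq)
    \<le> Lnorm rq (meas_conv (graph_measure \<phi> W) (\<lambda>w. complex_of_real
        (exp (- scaled_sqnorm (\<delta> powr \<alpha>1) (\<delta> powr \<alpha>2) (\<delta> powr m) (\<delta> powr m) w))))"
    using \<delta>(1) by (intro Lnorm_meas_conv_graph_measure_ge[OF W \<phi> _ S_W _ _ _ _ graph_S rq])
      (simp_all add: S_def)
  also have "exp (- (4 * (1 + R)\<^sup>2)) * measure lborel S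
      * (16 * (\<delta> powr \<alpha>1 * \<delta> powr \<alpha>2 * \<delta> powr m * \<delta> powr m)) powr rq
    = exp (- (4 * (1 + R)\<^sup>2)) * (\<delta> powr (\<alpha>1 + \<alpha>2) * measure lborel (cbox a b))
      * (16 powr rq * \<delta> powr ((\<alpha>1 + \<alpha>2 + 2 * m) * rq))"
    unfolding S_def measure_cbox_dil[OF \<delta>(1)] powr_mult_widths powr_mult powr_powr ..
  also have "\<dots> = exp (- (4 * (1 + R)\<^sup>2)) * measure lborel (cbox a b) * 16 powr rq
      * \<delta> powr (\<alpha>1 + \<alpha>2 + (\<alpha>1 + \<alpha>2 + 2 * m) * rq)"
    by (simp only: powr_add mult_ac)
  finally show ?thesis .
qed

theorem type_set_graph_measure_homogeneous:
  fixes \<phi> :: "R2 \<Rightarrow> R2" and W :: "R2 set"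
  assumes \<alpha>: "\<alpha>1 > 0" "\<alpha>2 > 0" and m: "m > 0"
    and W: "open W" "bounded W" "W \<noteq> {}" and \<phi>: "continuous_on W \<phi>"
    and dil_W: "\<And>x t. x \<in> W \<Longrightarrow> 0 < t \<Longrightarrow> t \<le> 1 \<Longrightarrow> dil \<alpha>1 \<alpha>2 t x \<in> W"
    and homogeneous: "\<And>x t. x \<in> W \<Longrightarrow> 0 < t \<Longrightarrow> t \<le> 1 \<Longrightarrow> \<phi> (dil \<alpha>1 \<alpha>2 t x) = t powr m *\<^sub>R \<phi> x"
    and E: "(rp, rq) \<in> type_set (graph_measure \<phi> W)"
  shows "rq \<ge> rp - (\<alpha>1 + \<alpha>2) / (\<alpha>1 + \<alpha>2 + 2 * m)"
proof -
  obtain C where rp: "0 \<le> rp" and rq: "0 \<le> rq" and C: "C > 0" and type_bound: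
    "\<And>f. schwartz f \<Longrightarrow> Lnorm rq (meas_conv (graph_measure \<phi> W) f) \<le> ennreal C * Lnorm rp f"
    using E unfolding type_set_def by blast
  define A where "A = \<alpha>1 + \<alpha>2"
  define M where "M = \<alpha>1 + \<alpha>2 + 2 * m"
  have A: "A > 0" and M: "M > 0" using \<alpha> m by (simp_all add: A_def M_def)
  have W_finite: "W \<in> sets lborel" "emeasure lborel W \<noteq> \<infinity>"
    using W emeasure_bounded_finite[of W] by auto
  show ?thesis
  proof (cases "rp = 0")
    case True
    then show ?thesis using rq divide_pos_pos[OF A M] by (simp add: A_def M_def)
  next
    case False
    with rp have rp: "rp > 0" by simp
    obtain a b R where Q: "cbox a b \<subseteq> W" "0 < measure lborel (cbox a b)"
      and graph_Q: "\<And>q. q \<in> cbox a b \<Longrightarrow>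
        \<bar>fst q\<bar> \<le> R \<and> \<bar>snd q\<bar> \<le> R \<and> \<bar>fst (\<phi> q)\<bar> \<le> R \<and> \<bar>snd (\<phi> q)\<bar> \<le> R"
      using open_contains_cbox_bounded_graph[OF W(1,3) \<phi>] by blast
    define X where "X = exp (- (4 * (1 + R)\<^sup>2)) * measure lborel (cbox a b) * 16 powr rq"
    define Y where "Y = C * ((pi * rp)\<^sup>2) powr rp"
    have X: "X > 0" using Q(2) by (simp add: X_def)
    have Y: "Y > 0" using C rp by (simp add: Y_def)
    have "X * \<delta> powr (A + M * rq) \<le> Y * \<delta> powr (M * rp)" if \<delta>: "0 < \<delta>" "\<delta> \<le> 1" for \<delta>
    proof -
      let ?f = "\<lambda>w. complex_of_real (exp (- scaled_sqnorm (\<delta> powr \<alpha>1) (\<delta> powr \<alpha>2) (\<delta> powr m) (\<delta> powr m) w))"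
      have "ennreal (X * \<delta> powr (A + M * rq)) \<le> Lnorm rq (meas_conv (graph_measure \<phi> W) ?f)"
        unfolding X_def A_def M_def
        by (rule Lnorm_meas_conv_graph_measure_dilated_ge[OF W_finite \<phi> dil_W homogeneous Q(1) graph_Q rq \<delta>])
      also have "\<dots> \<le> ennreal C * Lnorm rp ?f"
        using \<alpha> m \<delta> by (intro type_bound schwartz_exp_neg_scaled_sqnorm) (auto simp: powr_le1)
      also have "Lnorm rp ?f = ennreal (((pi * rp)\<^sup>2 * \<delta> powr M) powr rp)"
        using rp \<delta> by (simp add: Lnorm_exp_neg_scaled_sqnorm M_def powr_mult_widths)
      also have "ennreal C * \<dots> = ennreal (C * ((pi * rp)\<^sup>2 * \<delta> powr M) powr rp)"
        using C by (simp add: ennreal_mult)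
      also have "C * ((pi * rp)\<^sup>2 * \<delta> powr M) powr rp = Y * \<delta> powr (M * rp)"
        by (simp add: Y_def powr_mult powr_powr mult.assoc)
      finally show ?thesis
        using Y \<delta> by (simp add: ennreal_le_iff)
    qed
    then have "M * rp \<le> A + M * rq"
      by (rule exponent_le_of_powr_bound[OF X Y])
    then show ?thesis
      using M by (simp add: A_def M_def field_simps)
  qed
qed

theorem proposition4p5:
  fixes \<alpha>1 \<alpha>2 m a b c d \<sigma> :: real and \<phi> :: "R2 \<Rightarrow> R2" and rp rq :: real
  assumes alpha_pos: "\<alpha>1 > 0" "\<alpha>2 > 0" and alpha_ne: "\<alpha>1 \<noteq> \<alpha>2"
    and H1: "real_analytic_on2 (\<lambda>x. fst (\<phi> x)) (cone \<alpha>1 \<alpha>2 a b)"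
            "real_analytic_on2 (\<lambda>x. snd (\<phi> x)) (cone \<alpha>1 \<alpha>2 a b)"
    and H2: "m \<ge> 3 * (\<alpha>1 + \<alpha>2)"
            "\<forall>x\<in>cone \<alpha>1 \<alpha>2 a b. \<forall>t>0. \<phi> (dil \<alpha>1 \<alpha>2 t x) = t powr m *\<^sub>R \<phi> x"
    and H3: "a < c" "c < d" "d < b" "c \<le> \<sigma>" "\<sigma> \<le> d"
            "{x \<in> closure (cone \<alpha>1 \<alpha>2 c d) - {0}. \<not> elliptic \<phi> x}
               = {dil \<alpha>1 \<alpha>2 t (1, \<sigma>) | t. t > 0}"
    and H4: "\<exists>n1 n2 :: nat. \<exists>D \<delta> :: real. n1 > 0 \<and> n2 > 0 \<and> D > 0 \<and> \<delta> > 0 \<and>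
              (c < \<sigma> \<and> \<sigma> \<le> d \<longrightarrow>
                 (\<forall>s. \<sigma> - \<delta> < s \<and> s < \<sigma> \<longrightarrow> (\<forall>t>0.
                    minQ \<phi> (dil \<alpha>1 \<alpha>2 t (1, s))
                      \<ge> D * t powr (2 * (m - \<alpha>1 - \<alpha>2)) * \<bar>s - \<sigma>\<bar> ^ n1))) \<and>
              (c \<le> \<sigma> \<and> \<sigma> < d \<longrightarrow>
                 (\<forall>s. \<sigma> < s \<and> s < \<sigma> + \<delta> \<longrightarrow> (\<forall>t>0.
                    minQ \<phi> (dil \<alpha>1 \<alpha>2 t (1, s))
                      \<ge> D * t powr (2 * (m - \<alpha>1 - \<alpha>2)) * \<bar>s - \<sigma>\<bar> ^ n2))) \<and>
              real (max n1 n2) < 2 * m / (\<alpha>1 + \<alpha>2) - 3"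
    and E: "(rp, rq) \<in> type_set (graph_measure \<phi> (cone1 \<alpha>1 \<alpha>2 c d))"
  shows "rq \<ge> rp - (\<alpha>1 + \<alpha>2) / (\<alpha>1 + \<alpha>2 + 2 * m)"
proof -
  have cone1_cone: "cone1 \<alpha>1 \<alpha>2 c d \<subseteq> cone \<alpha>1 \<alpha>2 a b"
    using H3 by (intro cone1_subset_cone) auto
  have "continuous_on (cone1 \<alpha>1 \<alpha>2 c d) \<phi>"
  proof (intro continuous_at_imp_continuous_on ballI)
    fix x assume "x \<in> cone1 \<alpha>1 \<alpha>2 c d"
    then have "x \<in> cone \<alpha>1 \<alpha>2 a b" using cone1_cone by blast
    then have "isCont (\<lambda>x. (fst (\<phi> x), snd (\<phi> x))) x"
      by (intro continuous_Pair real_analytic_on2_imp_isCont[OF H1(1)] real_analytic_on2_imp_isCont[OF H1(2)])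
    then show "isCont \<phi> x" by simp
  qed
  moreover have "dil \<alpha>1 \<alpha>2 (1 / 2) (1, (c + d) / 2) \<in> cone1 \<alpha>1 \<alpha>2 c d"
    unfolding cone1_def using H3 by fastforce
  moreover have "\<phi> (dil \<alpha>1 \<alpha>2 t x) = t powr m *\<^sub>R \<phi> x" if "x \<in> cone1 \<alpha>1 \<alpha>2 c d" "0 < t" for x t
    using H2(2) cone1_cone that by blast
  moreover have "m > 0" using H2(1) alpha_pos by (simp add: distrib_left)
  ultimately show ?thesis
    using type_set_graph_measure_homogeneous[OF alpha_pos _ open_cone1 bounded_cone1[OF alpha_pos] _ _ dil_in_cone1 _ E]
      alpha_pos by blast
qed

end
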